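(* For $N\ge1$ let $G_N(z,w)=\sqrt\pi\sum_{k=0}^{N-1}\sum_{\ell=0}^k\frac{(k+2)(\ell+\frac32)}{\Gamma(k+\frac72)\Gamma(\ell+3)}z^{2k+1}w^{2\ell}$, $\varkappa_N(z,w)=G_N(z,w)-G_N(w,z)$ (the skew-kernel for the weight $|z|^2(1+|z|^2)e^{-2|z|^2}$), and $\widehat\varkappa_N(z,w)=(zw)^4\varkappa_N(z,w)$. Then $$\big[z\partial_z^2-(2z^2+2)\partial_z-2z\big]\widehat\varkappa_N(z,w)=\frac12\sum_{k=0}^{2N-1}\frac{(2zw)^{k+4}}{(k+1)!}-4\sqrt\pi\frac{(N+1)(N+2)}{\Gamma(N+\frac52)}z^{2N+4}\sum_{\ell=0}^{N-1}\frac{\ell+\frac32}{(\ell+2)!}w^{2\ell+4}-3\sqrt\pi z^3\sum_{k=0}^{N-1}\frac{k+2}{\Gamma(k+\frac72)}w^{2k+5}.$$ Moreover, as $N\to\infty$, $\varkappa_N(z,w)$ converges uniformly for $z,w$ in compact subsets of $\mathbb{C}$ to $$\frac12\frac{(z-w)(1+zw-e^{2zw})}{(zw)^4}+\frac{\sqrt\pi}{4}\frac{e^{z^2+w^2}(2z^2-1)(2w^2-1)\operatorname{erf}(z-w)}{(zw)^4}+\frac{\sqrt\pi}{4}\frac{(z^2-1)(2w^2-1)e^{w^2}\operatorname{erf}(w)-(w^2-1)(2z^2-1)e^{z^2}\operatorname{erf}(z)}{(zw)^4}.$$ *)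

theory Defs
  imports "HOL-Complex_Analysis.Complex_Analysis"
begin

text \<open>Complex error function: erf z = 2/sqrt(pi) times the integral of exp(-t^2) from 0 to z
  (along the straight segment; the integrand is entire so the path is irrelevant).\<close>
definition cerf :: "complex \<Rightarrow> complex" where
  "cerf z = complex_of_real (2 / sqrt pi) * contour_integral (linepath 0 z) (\<lambda>t. exp (- (t^2)))"

definition G :: "nat \<Rightarrow> complex \<Rightarrow> complex \<Rightarrow> complex" where
  "G N z w = complex_of_real (sqrt pi) *
     (\<Sum>k<N. \<Sum>l\<le>k. complex_of_real ((real k + 2) * (real l + 3/2) /
        (Gamma (real k + 7/2) * Gamma (real l + 3))) * z ^ (2*k+1) * w ^ (2*l))"

definition skew_kernel :: "nat \<Rightarrow> complex \<Rightarrow> complex \<Rightarrow> complex" where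
  "skew_kernel N z w = G N z w - G N w z"

definition skew_kernel_hat :: "nat \<Rightarrow> complex \<Rightarrow> complex \<Rightarrow> complex" where
  "skew_kernel_hat N z w = (z * w) ^ 4 * skew_kernel N z w"

definition kernel_limit :: "complex \<Rightarrow> complex \<Rightarrow> complex" where
  "kernel_limit z w =
     (1/2) * (z - w) * (1 + z*w - exp (2*z*w)) / (z*w)^4
   + complex_of_real (sqrt pi) / 4 * exp (z^2 + w^2) * (2*z^2 - 1) * (2*w^2 - 1) * cerf (z - w) / (z*w)^4
   + complex_of_real (sqrt pi) / 4 *
       ((z^2 - 1) * (2*w^2 - 1) * exp (w^2) * cerf w - (w^2 - 1) * (2*z^2 - 1) * exp (z^2) * cerf z)
       / (z*w)^4"

end

theory Submission
  imports Defs
begin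

text \<open>
  Write L for the operator z d^2/dz^2 - (2 z^2 + 2) d/dz - 2 z. As a function of z, (z w)^4 times
  the k-th row of the skew kernel is a polynomial, and L maps z^m to
  m (m - 3) z^(m-1) - (2 m + 2) z^(m+1). Through simple relations between the coefficients
  (ultimately the recursion of Gamma at half-integers) the resulting double sum telescopes, in l
  inside each row and then in N; this gives the differential identity.

  The rows are dominated on compact sets by a summable majorant, so the kernels converge locally
  uniformly, and (z w)^4 times the limit solves L y = R, where R is the limit of the right-hand
  sides. With S(x) = exp(x^2) erf x = (sum j. x^(2j+1) / Gamma(j + 3/2)), which satisfies
  S' = 2 / sqrt pi + 2 x S, the closed form multiplied by (z w)^4 solves the same equation, and both
  vanish at z = 0. The homogeneous equation has the solutions exp(z^2) (2 z^2 - 1) and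
  (2 z^2 - 1) S(z) + 2 z / sqrt pi, whose Wronskian vanishes only at 0; hence the difference is
  beta(w) times the odd solution, and antisymmetry in (z, w) forces beta = 0.
\<close>

lemma Gamma_plus1_pos: "(x::real) > 0 \<Longrightarrow> Gamma (x + 1) = x * Gamma x"
  by (rule Gamma_plus1) (use nonpos_Ints_nonpos[of x] in force)

definition s_coeff :: "nat \<Rightarrow> real" where
  "s_coeff j = 1 / Gamma (real j + 3/2)"

lemma s_coeff_pos: "s_coeff j > 0"
  unfolding s_coeff_def by (simp add: add_nonneg_pos)

lemma s_coeff_Suc: "s_coeff j = (real j + 3/2) * s_coeff (Suc j)"
proof -
  have "Gamma (real (Suc j) + 3/2) = (real j + 3/2) * Gamma (real j + 3/2)"
    using Gamma_plus1_pos[of "real j + 3/2"] by (simp add: add_ac)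
  then show ?thesis
    unfolding s_coeff_def using Gamma_real_pos[of "real j + 3/2"] by simp
qed

lemma s_coeff_0: "s_coeff 0 = 2 / sqrt pi"
proof -
  have "Gamma (1/2 + 1 :: real) = 1/2 * Gamma (1/2)"
    by (rule Gamma_plus1_pos) simp
  then have Gamma_3_2: "Gamma (3/2 :: real) = sqrt pi / 2"
    by (simp add: Gamma_one_half_real)
  show ?thesis
    by (simp add: s_coeff_def Gamma_3_2)
qed

lemma s_coeff_closed_form: "sqrt pi * s_coeff j * fact (2*j+2) = 4^(j+1) * fact (j+1)"
proof (induction j)
  case 0
  then show ?case by (simp add: s_coeff_0)
next
  case (Suc j)
  have "(fact (2 * Suc j + 2) :: real) = 2 * (real j + 2) * (2 * (real j + 3/2)) * fact (2*j+2)"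
    by (simp add: numeral_eq_Suc algebra_simps)
  then have "sqrt pi * s_coeff (Suc j) * fact (2 * Suc j + 2)
      = 4 * (real j + 2) * (sqrt pi * ((real j + 3/2) * s_coeff (Suc j)) * fact (2*j+2))"
    by (simp add: algebra_simps)
  also have "\<dots> = 4^(Suc j + 1) * fact (Suc j + 1)"
    unfolding s_coeff_Suc[of j, symmetric] Suc.IH by (simp add: algebra_simps)
  finally show ?case .
qed

lemma s_coeff_le: "s_coeff j \<le> 2 / fact j"
proof (induction j)
  case 0
  have "1 \<le> sqrt pi" using pi_gt3 by (simp add: real_le_rsqrt)
  then show ?case by (simp add: s_coeff_0 divide_simps)
next
  case (Suc j)
  have "s_coeff (Suc j) = s_coeff j / (real j + 3/2)"
    using s_coeff_Suc[of j] by (simp add: field_simps)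
  also have "\<dots> \<le> s_coeff j / (real j + 1)"
    using s_coeff_pos[of j] by (intro divide_left_mono) auto
  also have "\<dots> \<le> (2 / fact j) / (real j + 1)"
    using Suc.IH by (intro divide_right_mono) auto
  also have "\<dots> = 2 / fact (Suc j)"
    by simp
  finally show ?case .
qed

definition a_coeff :: "nat \<Rightarrow> real" where
  "a_coeff k = sqrt pi * (real k + 2) * s_coeff (k + 2)"

definition b_coeff :: "nat \<Rightarrow> real" where
  "b_coeff l = (real l + 3/2) / fact (l + 2)"

definition c_coeff :: "nat \<Rightarrow> real" where
  "c_coeff n = sqrt pi * (real n + 1) * (real n + 2) * s_coeff (n + 1)"

lemma a_coeff_pos: "a_coeff k > 0"
  unfolding a_coeff_def by (simp add: s_coeff_pos)

lemma b_coeff_pos: "b_coeff l > 0"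
  unfolding b_coeff_def by simp

lemma c_coeff_pos: "c_coeff n > 0"
  unfolding c_coeff_def by (simp add: s_coeff_pos)

lemma b_coeff_le_1: "b_coeff l \<le> 1"
proof -
  have "real l + 3/2 \<le> real (l+2)" by simp
  also have "\<dots> \<le> fact (l+2)" by (metis fact_ge_self of_nat_fact of_nat_le_iff)
  finally show ?thesis unfolding b_coeff_def by simp
qed

lemma a_coeff_le: "a_coeff k \<le> 4 / fact k"
proof -
  have "sqrt pi \<le> 2"
    using pi_less_4 by (simp add: real_sqrt_le_iff real_le_lsqrt)
  define F :: real where "F = fact (k+1)"
  have F: "fact (k+2) = (real k + 2) * F" "F > 0"
    unfolding F_def by (simp_all add: numeral_eq_Suc)
  have "a_coeff k \<le> 2 * (real k + 2) * (2 / fact (k+2))"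
    unfolding a_coeff_def using \<open>sqrt pi \<le> 2\<close> s_coeff_le[of "k+2"] s_coeff_pos[of "k+2"]
    by (intro mult_mono) auto
  also have "\<dots> = 4 / F"
    unfolding F(1) using F(2) by (simp add: divide_simps)
  also have "\<dots> \<le> 4 / fact k"
    unfolding F_def by (intro divide_left_mono) (auto simp: fact_mono)
  finally show ?thesis .
qed

lemma a_coeff_times_c_coeff: "a_coeff n * ((2 * real n + 5) * (2 * real n + 2)) = 4 * c_coeff n"
  unfolding a_coeff_def c_coeff_def using s_coeff_Suc[of "n+1"] by (simp add: algebra_simps)

lemma a_coeff_times_c_coeff_Suc: "a_coeff n * (4 * real n + 12) = 4 * c_coeff (Suc n)"
  unfolding a_coeff_def c_coeff_def by (simp add: algebra_simps)

lemma c_coeff_times_b_coeff: "4 * c_coeff n * b_coeff n = 2^(2*n+4) / (2 * fact (2*n+1))"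
proof -
  define F :: real where "F = fact (2*n+1)"
  define P :: real where "P = fact (n+2)"
  have "fact (2*(n+1)+2) = 8 * (real n + 1) * (real n + 2) * (real n + 3/2) * F"
    unfolding F_def by (simp add: numeral_eq_Suc algebra_simps)
  then have "sqrt pi * s_coeff (n+1) * (8 * (real n + 1) * (real n + 2) * (real n + 3/2) * F)
      = 4^(n+2) * P"
    using s_coeff_closed_form[of "n+1"] unfolding P_def by (simp add: add_ac)
  moreover have "F > 0" "P > 0" "(2::real)^(2*n+4) = 4^(n+2)"
    unfolding F_def P_def by (simp_all add: power_add power_mult)
  ultimately show ?thesis
    unfolding c_coeff_def b_coeff_def F_def[symmetric] P_def[symmetric]
    by (simp add: field_simps)
qed

lemma a_coeff_times_b_coeff: "a_coeff n * b_coeff n * (4 * real n + 10)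
    = 2^(2*n+5) / (2 * fact (2*n+2))"
proof -
  define F :: real where "F = fact (2*n+2)"
  define P :: real where "P = fact (n+2)"
  have E: "fact (2*(n+2)+2)
      = 16 * (real n + 2) * (real n + 3) * (real n + 3/2) * (real n + 5/2) * F"
    "fact (n+2+1) = (real n + 3) * P"
    unfolding F_def P_def by (simp_all add: numeral_eq_Suc algebra_simps)
  have "sqrt pi * s_coeff (n+2)
      * (16 * (real n + 2) * (real n + 3) * (real n + 3/2) * (real n + 5/2) * F)
      = 4^(n+3) * ((real n + 3) * P)"
    using s_coeff_closed_form[of "n+2"] unfolding E by (simp add: numeral_eq_Suc)
  moreover have "F > 0" "P > 0" "(2::real)^(2*n+5) = 2 * 4^(n+2)"
    unfolding F_def P_def by (simp_all add: power_add power_mult)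
  ultimately show ?thesis
    unfolding a_coeff_def b_coeff_def F_def[symmetric] P_def[symmetric]
    by (simp add: divide_simps power_add) (simp add: algebra_simps)
qed

lemma b_coeff_Suc: "b_coeff (Suc n) * ((2 * real n + 6) * (2 * real n + 3))
    = b_coeff n * (4 * real n + 10)"
proof -
  define P :: real where "P = fact (n+2)"
  have E: "fact (Suc n + 2) = (real n + 3) * P" and "P > 0"
    unfolding P_def by (simp_all add: numeral_eq_Suc)
  then show ?thesis
    unfolding b_coeff_def E P_def[symmetric] by (simp add: divide_simps) (simp add: algebra_simps)
qed

section \<open>The differential operator applied to the finite kernel\<close>

lemma G_eq_sum_coeffs: "G N z w
    = (\<Sum>k<N. \<Sum>l\<le>k. of_real (a_coeff k * b_coeff l) * z^(2*k+1) * w^(2*l))"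
  unfolding G_def sum_distrib_left
proof (intro sum.cong refl)
  fix k l
  have "Gamma (real l + 3) = fact (l + 2)"
    using Gamma_fact[of "l + 2", where 'a=real] by (simp add: add_ac)
  moreover have "Gamma (real (k + 2) + 3/2) = Gamma (real k + 7/2)"
    by (simp add: add_ac)
  ultimately have e: "sqrt pi
      * ((real k + 2) * (real l + 3/2) / (Gamma (real k + 7/2) * Gamma (real l + 3)))
      = a_coeff k * b_coeff l"
    unfolding a_coeff_def b_coeff_def s_coeff_def by (simp only:) simp
  then show "of_real (sqrt pi) * (of_real ((real k + 2) * (real l + 3/2) /
        (Gamma (real k + 7/2) * Gamma (real l + 3))) * z^(2*k+1) * w^(2*l))
      = of_real (a_coeff k * b_coeff l) * z^(2*k+1) * w^(2*l)"
    by (simp only: e[symmetric] of_real_mult mult.assoc)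
qed

definition kernel_row :: "nat \<Rightarrow> complex \<Rightarrow> complex \<Rightarrow> complex" where
  "kernel_row k z w =
     (\<Sum>l\<le>k. of_real (a_coeff k * b_coeff l) * (z^(2*k+1) * w^(2*l) - w^(2*k+1) * z^(2*l)))"

lemma skew_kernel_eq_sum_kernel_row: "skew_kernel N z w = (\<Sum>k<N. kernel_row k z w)"
  unfolding skew_kernel_def G_eq_sum_coeffs kernel_row_def
  by (simp add: sum_subtractf[symmetric] right_diff_distrib mult.assoc)

lemma kernel_row_swap: "kernel_row k w z = - kernel_row k z w"
  unfolding kernel_row_def by (simp add: sum_negf[symmetric] algebra_simps)

text \<open>The j-th derivative of z^m. The falling factorial vanishes for j > m, so the truncated
  exponent m - j is harmless.\<close>

definition power_deriv :: "nat \<Rightarrow> nat \<Rightarrow> 'a::real_normed_field \<Rightarrow> 'a" where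
  "power_deriv j m z = of_nat (\<Prod>i<j. m - i) * z ^ (m - j)"

lemma power_deriv_0 [simp]: "power_deriv 0 m z = z ^ m"
  by (simp add: power_deriv_def)

lemma has_field_derivative_power_deriv:
  "(power_deriv j m has_field_derivative power_deriv (Suc j) m z) (at z)"
proof -
  have "((\<lambda>z. z ^ (m - j)) has_field_derivative of_nat (m - j) * (1 * z ^ (m - j - Suc 0))) (at z)"
    by (rule DERIV_power[OF DERIV_ident])
  from DERIV_cmult[OF this, of "of_nat (\<Prod>i<j. m - i)"] show ?thesis
    unfolding power_deriv_def by (simp add: mult.assoc diff_diff_left)
qed

definition ode_op :: "complex \<Rightarrow> complex \<Rightarrow> complex \<Rightarrow> complex \<Rightarrow> complex" where
  "ode_op z y y' y'' = z * y'' - (2 * z^2 + 2) * y' - 2 * z * y"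

lemma ode_op_sum:
  "ode_op z (\<Sum>i\<in>A. y i) (\<Sum>i\<in>A. y' i) (\<Sum>i\<in>A. y'' i) = (\<Sum>i\<in>A. ode_op z (y i) (y' i) (y'' i))"
  unfolding ode_op_def by (simp add: sum_distrib_left sum_subtractf)

lemma ode_op_linear:
  "ode_op z (c * (a * y1 - b * y2)) (c * (a * y1' - b * y2')) (c * (a * y1'' - b * y2''))
     = c * (a * ode_op z y1 y1' y1'' - b * ode_op z y2 y2' y2'')"
  unfolding ode_op_def by (simp add: algebra_simps)

lemma ode_op_diff:
  "ode_op z (y1 - y2) (y1' - y2') (y1'' - y2'') = ode_op z y1 y1' y1'' - ode_op z y2 y2' y2''"
  unfolding ode_op_def by (simp add: algebra_simps)

lemma ode_op_power:
  "ode_op z (power_deriv 0 m z) (power_deriv 1 m z) (power_deriv 2 m z)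
     = of_nat m * (of_nat m - 3) * z^(m-1) - (2 * of_nat m + 2) * z^(m+1)"
proof (cases "m \<ge> 2")
  case True
  then obtain p where m: "m = p + 2"
    using add.commute le_Suc_ex by blast
  show ?thesis
    unfolding ode_op_def power_deriv_def m
    by (simp add: numeral_eq_Suc power2_eq_square algebra_simps)
next
  case False
  then consider "m = 0" | "m = 1"
    by linarith
  then show ?thesis
    by cases (simp_all add: ode_op_def power_deriv_def power2_eq_square algebra_simps)
qed

definition hat_row :: "nat \<Rightarrow> nat \<Rightarrow> complex \<Rightarrow> complex \<Rightarrow> complex" where
  "hat_row j k z w =
     (\<Sum>l\<le>k. of_real (a_coeff k * b_coeff l) *
        (w^(2*l+4) * power_deriv j (2*k+5) z - w^(2*k+5) * power_deriv j (2*l+4) z))"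

lemma hat_row_0: "hat_row 0 k z w = (z*w)^4 * kernel_row k z w"
  unfolding hat_row_def kernel_row_def sum_distrib_left
  by (intro sum.cong refl) (simp add: algebra_simps power_mult_distrib power_add eval_nat_numeral)

lemma has_field_derivative_hat_row:
  "((\<lambda>z. hat_row j k z w) has_field_derivative hat_row (Suc j) k z w) (at z)"
  unfolding hat_row_def
  by (intro DERIV_sum DERIV_cmult DERIV_diff has_field_derivative_power_deriv)

lemma sum_b_coeff_ode_op_power:
  "(\<Sum>l\<le>n. of_real (b_coeff l) *
      ode_op z (power_deriv 0 (2*l+4) z) (power_deriv 1 (2*l+4) z) (power_deriv 2 (2*l+4) z))
   = 3 * z^3 - of_real (b_coeff n * (4 * real n + 10)) * z^(2*n+5)"
proof (induction n)
  case 0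
  show ?case
    unfolding ode_op_power by (simp add: b_coeff_def algebra_simps)
next
  case (Suc n)
  have b: "of_real (b_coeff (Suc n)) * ((2 * of_nat n + 6) * (2 * of_nat n + 3))
      = (of_real (b_coeff n * (4 * real n + 10)) :: complex)"
    using arg_cong[OF b_coeff_Suc[of n], of complex_of_real] by simp
  have "(\<Sum>l\<le>Suc n. of_real (b_coeff l) *
      ode_op z (power_deriv 0 (2*l+4) z) (power_deriv 1 (2*l+4) z) (power_deriv 2 (2*l+4) z))
    = 3 * z^3 - of_real (b_coeff n * (4 * real n + 10)) * z^(2*n+5)
      + of_real (b_coeff (Suc n)) * ((2 * of_nat n + 6) * (2 * of_nat n + 3) * z^(2*n+5)
      - (4 * of_nat n + 14) * z^(2*n+7))"
    using Suc.IH unfolding ode_op_power by (simp add: algebra_simps)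
  also have "\<dots> = 3 * z^3 - of_real (b_coeff (Suc n) * (4 * real (Suc n) + 10)) * z^(2 * Suc n + 5)"
    unfolding b[symmetric] by (simp add: algebra_simps)
  finally show ?case .
qed

lemma ode_op_hat_row:
  "ode_op z (hat_row 0 k z w) (hat_row 1 k z w) (hat_row 2 k z w)
     = (of_real (4 * c_coeff k) * z^(2*k+4) - of_real (4 * c_coeff (Suc k)) * z^(2*k+6))
         * (\<Sum>l\<le>k. of_real (b_coeff l) * w^(2*l+4))
       - of_real (a_coeff k) * w^(2*k+5)
           * (3 * z^3 - of_real (b_coeff k * (4 * real k + 10)) * z^(2*k+5))"
proof -
  define L where "L m = ode_op z (power_deriv 0 m z) (power_deriv 1 m z) (power_deriv 2 m z)" for m
  have c1: "of_real (a_coeff k) * ((2 * of_nat k + 5) * (2 * of_nat k + 2))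
      = (of_real (4 * c_coeff k) :: complex)"
    using arg_cong[OF a_coeff_times_c_coeff[of k], of complex_of_real] by simp
  have c2: "of_real (a_coeff k) * (4 * of_nat k + 12) = (of_real (4 * c_coeff (Suc k)) :: complex)"
    using arg_cong[OF a_coeff_times_c_coeff_Suc[of k], of complex_of_real] by simp
  have Lk: "L (2*k+5)
      = (2 * of_nat k + 5) * (2 * of_nat k + 2) * z^(2*k+4) - (4 * of_nat k + 12) * z^(2*k+6)"
    unfolding L_def ode_op_power by (simp add: algebra_simps)
  have aL: "of_real (a_coeff k) * L (2*k+5)
      = of_real (4 * c_coeff k) * z^(2*k+4) - of_real (4 * c_coeff (Suc k)) * z^(2*k+6)"
    unfolding Lk c1[symmetric] c2[symmetric] by (simp add: algebra_simps)
  have "ode_op z (hat_row 0 k z w) (hat_row 1 k z w) (hat_row 2 k z w)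
      = (\<Sum>l\<le>k. of_real (a_coeff k * b_coeff l) * (w^(2*l+4) * L (2*k+5) - w^(2*k+5) * L (2*l+4)))"
    unfolding hat_row_def ode_op_sum ode_op_linear L_def ..
  also have "\<dots> = of_real (a_coeff k) * L (2*k+5) * (\<Sum>l\<le>k. of_real (b_coeff l) * w^(2*l+4))
      - of_real (a_coeff k) * w^(2*k+5) * (\<Sum>l\<le>k. of_real (b_coeff l) * L (2*l+4))"
    by (simp add: sum_distrib_left sum_subtractf[symmetric] algebra_simps)
  also have "\<dots> = (of_real (4 * c_coeff k) * z^(2*k+4) - of_real (4 * c_coeff (Suc k)) * z^(2*k+6))
         * (\<Sum>l\<le>k. of_real (b_coeff l) * w^(2*l+4))
       - of_real (a_coeff k) * w^(2*k+5)
           * (3 * z^3 - of_real (b_coeff k * (4 * real k + 10)) * z^(2*k+5))"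
    unfolding aL unfolding L_def sum_b_coeff_ode_op_power ..
  finally show ?thesis .
qed

definition kernel_ode_rhs :: "nat \<Rightarrow> complex \<Rightarrow> complex \<Rightarrow> complex" where
  "kernel_ode_rhs N z w =
     (1/2) * (\<Sum>k<2*N. (2*z*w)^(k+4) / of_nat (fact (k+1)))
     - 4 * of_real (c_coeff N) * z^(2*N+4) * (\<Sum>l<N. of_real (b_coeff l) * w^(2*l+4))
     - 3 * z^3 * (\<Sum>k<N. of_real (a_coeff k) * w^(2*k+5))"

lemma kernel_ode_rhs_Suc:
  "kernel_ode_rhs (Suc N) z w
     = kernel_ode_rhs N z w + ode_op z (hat_row 0 N z w) (hat_row 1 N z w) (hat_row 2 N z w)"
proof -
  define X where "X = (\<Sum>l<N. of_real (b_coeff l) * w^(2*l+4))"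
  define Y where "Y = (\<Sum>k<N. of_real (a_coeff k) * w^(2*k+5))"
  define Z where "Z = (\<Sum>k<2*N. (2*z*w)^(k+4) / of_nat (fact (k+1)))"
  define t4 where "t4 = (2*z*w)^(2*N+4) / of_nat (fact (2*N+1))"
  define t5 where "t5 = (2*z*w)^(2*N+5) / of_nat (fact (2*N+2))"
  have sum_b: "(\<Sum>l\<le>N. of_real (b_coeff l) * w^(2*l+4)) = X + of_real (b_coeff N) * w^(2*N+4)"
    "(\<Sum>l<Suc N. of_real (b_coeff l) * w^(2*l+4)) = X + of_real (b_coeff N) * w^(2*N+4)"
    unfolding X_def by (simp_all add: lessThan_Suc_atMost[symmetric])
  have sum_a: "(\<Sum>k<Suc N. of_real (a_coeff k) * w^(2*k+5)) = Y + of_real (a_coeff N) * w^(2*N+5)"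
    unfolding Y_def by simp
  have sum_exp: "(\<Sum>k<2 * Suc N. (2*z*w)^(k+4) / of_nat (fact (k+1))) = Z + t4 + t5"
  proof -
    have "2 * Suc N = Suc (Suc (2*N))" by simp
    then show ?thesis unfolding Z_def t4_def t5_def by (simp add: algebra_simps)
  qed
  have t4: "(1/2) * t4 = of_real (4 * c_coeff N) * of_real (b_coeff N) * z^(2*N+4) * w^(2*N+4)"
  proof -
    have "of_real (4 * c_coeff N) * of_real (b_coeff N)
        = (of_real (2^(2*N+4) / (2 * fact (2*N+1))) :: complex)"
      using arg_cong[OF c_coeff_times_b_coeff[of N], of complex_of_real] by simp
    then show ?thesis unfolding t4_def by (simp add: power_mult_distrib field_simps)
  qed
  have t5: "(1/2) * t5
      = of_real (a_coeff N) * of_real (b_coeff N * (4 * real N + 10)) * z^(2*N+5) * w^(2*N+5)"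
  proof -
    have "of_real (a_coeff N) * of_real (b_coeff N * (4 * real N + 10))
        = (of_real (2^(2*N+5) / (2 * fact (2*N+2))) :: complex)"
      using arg_cong[OF a_coeff_times_b_coeff[of N], of complex_of_real] by (simp add: mult.assoc)
    then show ?thesis unfolding t5_def by (simp add: power_mult_distrib field_simps)
  qed
  have "kernel_ode_rhs (Suc N) z w = (1/2) * Z + (1/2) * t4 + (1/2) * t5
      - 4 * of_real (c_coeff (Suc N)) * z^(2*N+6) * (X + of_real (b_coeff N) * w^(2*N+4))
      - 3 * z^3 * (Y + of_real (a_coeff N) * w^(2*N+5))"
    unfolding kernel_ode_rhs_def sum_b sum_a sum_exp by (simp add: algebra_simps)
  also have "\<dots> = kernel_ode_rhs N z w
      + ode_op z (hat_row 0 N z w) (hat_row 1 N z w) (hat_row 2 N z w)"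
    unfolding t4 t5 ode_op_hat_row kernel_ode_rhs_def sum_b
      X_def[symmetric] Y_def[symmetric] Z_def[symmetric]
    by (simp add: algebra_simps)
  finally show ?thesis .
qed

lemma ode_op_sum_hat_row:
  "ode_op z (\<Sum>k<N. hat_row 0 k z w) (\<Sum>k<N. hat_row 1 k z w) (\<Sum>k<N. hat_row 2 k z w)
     = kernel_ode_rhs N z w"
  unfolding ode_op_sum
proof (induction N)
  case 0
  show ?case
    by (simp add: kernel_ode_rhs_def)
next
  case (Suc N)
  then show ?case
    by (simp add: kernel_ode_rhs_Suc)
qed

lemma ode_op_skew_kernel_hat:
  "ode_op z (skew_kernel_hat N z w) (deriv (\<lambda>\<zeta>. skew_kernel_hat N \<zeta> w) z)
     (deriv (deriv (\<lambda>\<zeta>. skew_kernel_hat N \<zeta> w)) z) = kernel_ode_rhs N z w"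
proof -
  have hat: "skew_kernel_hat N \<zeta> w = (\<Sum>k<N. hat_row 0 k \<zeta> w)" for \<zeta>
    by (simp add: skew_kernel_hat_def skew_kernel_eq_sum_kernel_row hat_row_0 sum_distrib_left)
  have deriv: "deriv (\<lambda>\<zeta>. \<Sum>k<N. hat_row j k \<zeta> w) = (\<lambda>\<zeta>. \<Sum>k<N. hat_row (Suc j) k \<zeta> w)" for j
    by (intro ext DERIV_imp_deriv DERIV_sum has_field_derivative_hat_row)
  show ?thesis
    using ode_op_sum_hat_row deriv[of 0] deriv[of 1]
    unfolding hat by (simp add: numeral_2_eq_2)
qed

lemma kernel_ode_rhs_eq:
  assumes "N \<ge> 1"
  shows "kernel_ode_rhs N z w
    = (1/2) * (\<Sum>k\<le>2*N-1. (2*z*w) ^ (k+4) / of_nat (fact (k+1)))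
      - 4 * complex_of_real (sqrt pi * (real N + 1) * (real N + 2) / Gamma (real N + 5/2))
          * z ^ (2*N+4) * (\<Sum>l<N. complex_of_real ((real l + 3/2) / fact (l+2)) * w ^ (2*l+4))
      - 3 * complex_of_real (sqrt pi) * z^3
          * (\<Sum>k<N. complex_of_real ((real k + 2) / Gamma (real k + 7/2)) * w ^ (2*k+5))"
proof -
  have "{..2*N-1} = {..<2*N}"
    using assms by auto
  moreover have "c_coeff N = sqrt pi * (real N + 1) * (real N + 2) / Gamma (real N + 5/2)"
    unfolding c_coeff_def s_coeff_def by (simp add: add_ac)
  moreover have "of_real (a_coeff k)
      = of_real (sqrt pi) * complex_of_real ((real k + 2) / Gamma (real k + 7/2))" for k
    unfolding a_coeff_def s_coeff_def by (simp add: add_ac)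
  ultimately show ?thesis
    unfolding kernel_ode_rhs_def b_coeff_def by (simp add: sum_distrib_left mult_ac)
qed

section \<open>Locally uniform convergence\<close>

lemma norm_power_mult_power_deriv_le:
  fixes z w :: "'a::real_normed_field"
  assumes "norm z \<le> R" "norm w \<le> R" "1 \<le> R" "m \<le> M" "p + m \<le> n"
  shows "norm (w^p * power_deriv j m z) \<le> real M ^ j * R ^ n"
proof -
  have "(\<Prod>i<j. m - i) \<le> (\<Prod>i<j. M)"
    using assms(4) by (intro prod_mono) auto
  then have P: "real (\<Prod>i<j. m - i) \<le> real M ^ j"
    by (metis of_nat_le_iff of_nat_power prod_constant card_lessThan)
  have "norm w ^ p * norm z ^ (m - j) \<le> R ^ p * R ^ m"
    using assms(1-3)
    by (intro mult_mono power_mono order.trans[OF _ power_increasing[of "m - j" m R]]) auto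
  also have "\<dots> \<le> R ^ n"
    unfolding power_add[symmetric] using assms(3,5) by (intro power_increasing) auto
  finally have "norm w ^ p * norm z ^ (m - j) \<le> R ^ n" .
  then have "real (\<Prod>i<j. m - i) * (norm w ^ p * norm z ^ (m - j)) \<le> real M ^ j * R ^ n"
    using P by (intro mult_mono) auto
  then show ?thesis
    unfolding power_deriv_def norm_mult norm_power norm_of_nat by (simp add: mult_ac)
qed

definition row_bound :: "nat \<Rightarrow> real \<Rightarrow> nat \<Rightarrow> real" where
  "row_bound j R k = 2 * real (k + 1) * real (2*k+5) ^ j * a_coeff k * R ^ (4*k+9)"

lemma norm_row_term_le:
  fixes A B :: complex
  assumes "norm A \<le> C" "norm B \<le> C"
  shows "norm (of_real (a_coeff k * b_coeff l) * (A - B)) \<le> 2 * C * a_coeff k"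
proof -
  have "norm (of_real (a_coeff k * b_coeff l) * (A - B)) \<le> a_coeff k * (norm A + norm B)"
    unfolding norm_mult norm_of_real
    using a_coeff_pos[of k] b_coeff_pos[of l] b_coeff_le_1[of l] norm_triangle_ineq4[of A B]
    by (intro mult_mono) (auto simp: mult_le_cancel_left1)
  also have "\<dots> \<le> 2 * C * a_coeff k"
    using assms a_coeff_pos[of k] by (simp add: mult_left_mono)
  finally show ?thesis .
qed

lemma norm_sum_atMost_le:
  "(\<And>l. l \<le> k \<Longrightarrow> norm (f l) \<le> B) \<Longrightarrow> norm (\<Sum>l\<le>k. f l) \<le> real (k+1) * B"
  using sum_norm_le[of "{..k}" f "\<lambda>_. B"] by simp

lemma norm_hat_row_le:
  assumes "norm z \<le> R" "norm w \<le> R" "1 \<le> R"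
  shows "norm (hat_row j k z w) \<le> row_bound j R k"
proof -
  have "norm (hat_row j k z w) \<le> real (k+1) * (2 * (real (2*k+5) ^ j * R ^ (4*k+9)) * a_coeff k)"
    unfolding hat_row_def
    by (intro norm_sum_atMost_le norm_row_term_le norm_power_mult_power_deriv_le[OF assms]) auto
  then show ?thesis
    by (simp add: row_bound_def algebra_simps)
qed

lemma norm_kernel_row_le:
  assumes "norm z \<le> R" "norm w \<le> R" "1 \<le> R"
  shows "norm (kernel_row k z w) \<le> row_bound 0 R k"
proof -
  have "norm (kernel_row k z w) \<le> real (k+1) * (2 * (real (2*k+5) ^ 0 * R ^ (4*k+9)) * a_coeff k)"
    unfolding kernel_row_def
  proof (intro norm_sum_atMost_le norm_row_term_le)
    fix l assume "l \<le> k"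
    then show "norm (z^(2*k+1) * w^(2*l)) \<le> real (2*k+5) ^ 0 * R ^ (4*k+9)"
      "norm (w^(2*k+1) * z^(2*l)) \<le> real (2*k+5) ^ 0 * R ^ (4*k+9)"
      using norm_power_mult_power_deriv_le[OF assms(1,2,3), of "2*k+1" "2*k+5" "2*l" "4*k+9" 0]
        norm_power_mult_power_deriv_le[OF assms(2,1,3), of "2*k+1" "2*k+5" "2*l" "4*k+9" 0]
      by (simp_all add: mult.commute)
  qed
  then show ?thesis
    by (simp add: row_bound_def algebra_simps)
qed

lemma summable_row_bound:
  assumes "0 \<le> R"
  shows "summable (row_bound j R)"
proof (rule summable_comparison_test)
  show "summable (\<lambda>k. 8 * 5^j * R^9 * (inverse (fact k) * (2^(j+1) * R^4)^k))"
    by (intro summable_mult summable_exp)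
  show "\<exists>N. \<forall>k\<ge>N. norm (row_bound j R k) \<le> 8 * 5^j * R^9 * (inverse (fact k) * (2^(j+1) * R^4)^k)"
  proof (intro exI allI impI)
    fix k :: nat
    have k1: "real (k + 1) \<le> 2^k"
      using less_exp[of k] by (metis Suc_eq_plus1 Suc_leI of_nat_le_iff of_nat_numeral of_nat_power)
    have "real (2*k+5) \<le> 5 * real (k+1)" by simp
    also have "\<dots> \<le> 5 * 2^k" using k1 by simp
    finally have k5: "real (2*k+5) ^ j \<le> 5^j * (2^j)^k"
      by (metis power_mono of_nat_0_le_iff power_mult_distrib power_mult mult.commute)
    have "norm (row_bound j R k) = 2 * real (k + 1) * real (2*k+5) ^ j * a_coeff k * R ^ (4*k+9)"
      unfolding row_bound_def using a_coeff_pos[of k] assms by simp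
    also have "\<dots> \<le> 2 * 2^k * (5^j * (2^j)^k) * (4 / fact k) * R ^ (4*k+9)"
      using k1 k5 a_coeff_le[of k] a_coeff_pos[of k] assms
      by (intro mult_right_mono mult_mono) auto
    also have "\<dots> = 8 * 5^j * R^9 * (inverse (fact k) * (2^(j+1) * R^4)^k)"
    proof -
      have "R ^ (4*k+9) = R^9 * (R^4)^k"
        by (simp add: power_add power_mult)
      moreover have "(2::real)^k * (2^j)^k = (2^(j+1))^k"
        by (metis power_mult_distrib power_Suc Suc_eq_plus1 mult.commute)
      ultimately show ?thesis
        by (simp add: power_mult_distrib divide_inverse mult_ac)
    qed
    finally show "norm (row_bound j R k) \<le> 8 * 5^j * R^9 * (inverse (fact k) * (2^(j+1) * R^4)^k)" .
  qed
qed

lemma uniform_limit_skew_kernel: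
  assumes "compact S"
  shows "uniform_limit S (\<lambda>N p. skew_kernel N (fst p) (snd p))
    (\<lambda>p. \<Sum>k. kernel_row k (fst p) (snd p)) sequentially"
proof -
  obtain B where B: "\<And>p. p \<in> S \<Longrightarrow> norm p \<le> B"
    using compact_imp_bounded[OF assms] by (auto simp: bounded_iff)
  define R where "R = max 1 B"
  have "1 \<le> R"
    unfolding R_def by simp
  have "norm (kernel_row k (fst p) (snd p)) \<le> row_bound 0 R k" if "p \<in> S" for k p
  proof (rule norm_kernel_row_le)
    show "norm (fst p) \<le> R" "norm (snd p) \<le> R"
      using B[OF that] norm_fst_le[of "fst p" "snd p"] norm_snd_le[of "snd p" "fst p"]
      unfolding R_def by simp_all
  qed fact
  then have "uniform_limit S (\<lambda>N p. \<Sum>k<N. kernel_row k (fst p) (snd p))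
      (\<lambda>p. \<Sum>k. kernel_row k (fst p) (snd p)) sequentially"
    using \<open>1 \<le> R\<close> by (intro Weierstrass_m_test[OF _ summable_row_bound]) auto
  then show ?thesis
    unfolding skew_kernel_eq_sum_kernel_row .
qed

lemma has_field_derivative_suminf:
  fixes f f' :: "nat \<Rightarrow> 'a::{real_normed_field,banach} \<Rightarrow> 'a"
  assumes deriv: "\<And>n z. (f n has_field_derivative f' n z) (at z)"
    and bound: "\<And>R n z. r \<le> R \<Longrightarrow> norm z \<le> R \<Longrightarrow> norm (f' n z) \<le> M R n"
    and summable_M: "\<And>R. r \<le> R \<Longrightarrow> summable (M R)"
    and summable_at_a: "summable (\<lambda>n. f n a)"
  shows "((\<lambda>z. \<Sum>n. f n z) has_field_derivative (\<Sum>n. f' n z)) (at z)"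
proof -
  define R where "R = max r (max (norm a) (norm z + 1))"
  have R: "r \<le> R" "norm a \<le> R" "norm z < R"
    unfolding R_def by auto
  have "uniformly_convergent_on (cball 0 R) (\<lambda>n x. \<Sum>i<n. f' i x)"
    using R(1) by (intro Weierstrass_m_test'[OF _ summable_M]) (auto intro: bound)
  moreover have "z \<in> interior (cball 0 R)"
    using R by simp
  ultimately show ?thesis
    using has_field_derivative_series'[of "cball 0 R" f f' a z] R deriv summable_at_a
    by (auto intro: has_field_derivative_at_within)
qed

definition kernel_hat_series :: "nat \<Rightarrow> complex \<Rightarrow> complex \<Rightarrow> complex" where
  "kernel_hat_series j z w = (\<Sum>k. hat_row j k z w)"

lemma summable_hat_row: "summable (\<lambda>k. hat_row j k z w)"
proof (rule summable_comparison_test'[OF summable_row_bound])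
  let ?R = "max 1 (max (norm z) (norm w))"
  show "norm (hat_row j k z w) \<le> row_bound j ?R k" for k
    by (rule norm_hat_row_le) auto
qed auto

lemma summable_kernel_row: "summable (\<lambda>k. kernel_row k z w)"
proof (rule summable_comparison_test'[OF summable_row_bound])
  let ?R = "max 1 (max (norm z) (norm w))"
  show "norm (kernel_row k z w) \<le> row_bound 0 ?R k" for k
    by (rule norm_kernel_row_le) auto
qed auto

lemma has_field_derivative_kernel_hat_series:
  "((\<lambda>z. kernel_hat_series j z w) has_field_derivative kernel_hat_series (Suc j) z w) (at z)"
  unfolding kernel_hat_series_def
proof (rule has_field_derivative_suminf[where r = "max 1 (norm w)" and M = "row_bound (Suc j)"])
  show "norm (hat_row (Suc j) k z w) \<le> row_bound (Suc j) R k"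
    if "max 1 (norm w) \<le> R" "norm z \<le> R" for R k z
    using that by (intro norm_hat_row_le) auto
qed (auto intro: has_field_derivative_hat_row summable_row_bound summable_hat_row)

lemma kernel_hat_series_0: "kernel_hat_series 0 z w = (z*w)^4 * (\<Sum>k. kernel_row k z w)"
  unfolding kernel_hat_series_def hat_row_0 by (rule suminf_mult[OF summable_kernel_row])

lemma kernel_hat_series_swap: "kernel_hat_series 0 w z = - kernel_hat_series 0 z w"
proof -
  have "(\<Sum>k. kernel_row k w z) = - (\<Sum>k. kernel_row k z w)"
    unfolding kernel_row_swap[of _ w z] by (rule suminf_minus[OF summable_kernel_row])
  then show ?thesis
    unfolding kernel_hat_series_0 by (simp add: mult.commute)
qed

section \<open>The scaled error function\<close>

definition scaled_erf :: "complex \<Rightarrow> complex" where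
  "scaled_erf x = (\<Sum>j. of_real (s_coeff j) * x^(2*j+1))"

lemma scaled_erf_sums: "(\<lambda>j. of_real (s_coeff j) * x^(2*j+1)) sums scaled_erf x"
proof -
  have "norm (of_real (s_coeff j) * x^(2*j+1))
      \<le> 2 * norm x * (inverse (fact j) * (norm x ^ 2)^j)" for j
  proof -
    have "norm (of_real (s_coeff j) * x^(2*j+1)) = s_coeff j * norm x ^ (2*j+1)"
      using s_coeff_pos[of j] by (simp add: norm_mult norm_power)
    also have "\<dots> \<le> 2 / fact j * norm x ^ (2*j+1)"
      using s_coeff_le[of j] by (intro mult_right_mono) auto
    also have "\<dots> = 2 * norm x * (inverse (fact j) * (norm x ^ 2)^j)"
      by (simp add: power_add power_mult[symmetric] field_simps)
    finally show ?thesis .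
  qed
  then have "summable (\<lambda>j. of_real (s_coeff j) * x^(2*j+1))"
    by (intro summable_comparison_test'[OF summable_mult[OF summable_exp]]) auto
  then show ?thesis
    unfolding scaled_erf_def by (rule summable_sums)
qed

lemma scaled_erf_0 [simp]: "scaled_erf 0 = 0"
  unfolding scaled_erf_def by simp

lemma scaled_erf_minus: "scaled_erf (-x) = - scaled_erf x"
proof -
  have "(\<lambda>j. of_real (s_coeff j) * (-x)^(2*j+1)) sums (- scaled_erf x)"
    using sums_minus[OF scaled_erf_sums[of x]] by (simp add: power_minus')
  then show ?thesis
    using scaled_erf_sums[of "-x"] sums_unique2 by blast
qed

lemma has_field_derivative_scaled_erf:
  "(scaled_erf has_field_derivative of_real (2 / sqrt pi) + 2 * x * scaled_erf x) (at x)"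
proof -
  define t where "t j x = of_nat (2*j+1) * of_real (s_coeff j) * x^(2*j)" for j and x :: complex
  have deriv: "((\<lambda>x. of_real (s_coeff j) * x^(2*j+1)) has_field_derivative t j x) (at x)" for j x
  proof -
    have "((\<lambda>x. x^(2*j+1)) has_field_derivative of_nat (2*j+1) * (1 * x^(2*j+1 - Suc 0))) (at x)"
      by (rule DERIV_power[OF DERIV_ident])
    from DERIV_cmult[OF this, of "of_real (s_coeff j)"] show ?thesis
      unfolding t_def by (simp add: mult_ac)
  qed
  have bound: "norm (t j x) \<le> 4 * (inverse (fact j) * (2 * R^2)^j)" if "norm x \<le> R" for j x R
  proof -
    have "2*j+1 \<le> 2 * 2^j"
      using less_exp[of j] by linarith
    then have "real (2*j+1) \<le> 2 * 2^j"
      by (metis of_nat_le_iff of_nat_mult of_nat_numeral of_nat_power)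
    then have "norm (t j x) \<le> (2 * 2^j) * (2 / fact j) * R^(2*j)"
      unfolding t_def norm_mult norm_power norm_of_nat norm_of_real
      using that s_coeff_le[of j] s_coeff_pos[of j]
      by (intro mult_mono power_mono) auto
    also have "\<dots> = 4 * (inverse (fact j) * (2 * R^2)^j)"
      by (simp add: power_mult[symmetric] power_mult_distrib field_simps mult.commute[of 2 j])
    finally show ?thesis .
  qed
  have "(\<lambda>j. t (Suc j) x) = (\<lambda>j. 2 * x * (of_real (s_coeff j) * x^(2*j+1)))"
  proof
    fix j
    have "of_nat (2 * Suc j + 1) * (of_real (s_coeff (Suc j)) :: complex) = 2 * of_real (s_coeff j)"
      using arg_cong[OF s_coeff_Suc[of j], of complex_of_real] by (simp add: algebra_simps)
    then show "t (Suc j) x = 2 * x * (of_real (s_coeff j) * x^(2*j+1))"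
      unfolding t_def by (simp add: algebra_simps power2_eq_square)
  qed
  then have "(\<lambda>j. t (Suc j) x) sums (2 * x * scaled_erf x)"
    using sums_mult[OF scaled_erf_sums, of "2*x"] by simp
  then have "(\<lambda>j. t j x) sums (2 * x * scaled_erf x + t 0 x)"
    by (rule sums_Suc_iff[THEN iffD1])
  moreover have "t 0 x = of_real (2 / sqrt pi)"
    by (simp add: t_def s_coeff_0)
  moreover have "(scaled_erf has_field_derivative (\<Sum>j. t j x)) (at x)"
    unfolding scaled_erf_def[abs_def]
  proof (rule has_field_derivative_suminf[where r = 0 and a = 0, OF deriv bound])
    show "summable (\<lambda>j. 4 * (inverse (fact j) * (2 * R^2)^j))" for R :: real
      by (intro summable_mult summable_exp)
  qed simp_all
  ultimately show ?thesis
    by (simp add: sums_iff add.commute)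
qed

lemma has_field_derivative_scaled_erf_comp [derivative_intros]:
  assumes "(f has_field_derivative f') (at x within S)"
  shows "((\<lambda>x. scaled_erf (f x)) has_field_derivative
           (of_real (2 / sqrt pi) + 2 * f x * scaled_erf (f x)) * f') (at x within S)"
  using DERIV_chain2[OF has_field_derivative_scaled_erf assms] .

lemma scaled_erf_eq_exp_cerf: "scaled_erf z = exp (z^2) * cerf z"
proof -
  define F where "F t = of_real (sqrt pi / 2) * exp (-(t^2)) * scaled_erf t" for t
  have F': "(F has_field_derivative exp (-(t^2))) (at t)" for t
  proof -
    have "(F has_field_derivative of_real (sqrt pi / 2) * (exp (-(t^2)) * (-(2*t)) * scaled_erf t
        + exp (-(t^2)) * (of_real (2 / sqrt pi) + 2 * t * scaled_erf t))) (at t)"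
      unfolding F_def[abs_def] by (auto intro!: derivative_eq_intros simp: algebra_simps)
    moreover have "of_real (sqrt pi / 2) * (of_real (2 / sqrt pi) :: complex) = 1"
      by (simp flip: of_real_mult)
    ultimately show ?thesis
      by (simp add: algebra_simps)
  qed
  have "((\<lambda>t. exp (-(t^2))) has_contour_integral F z - F 0) (linepath 0 z)"
    using contour_integral_primitive[where S = UNIV, OF _ valid_path_linepath] F'
    by (fastforce intro: has_field_derivative_at_within)
  then have "cerf z = of_real (2 / sqrt pi) * F z"
    unfolding cerf_def by (simp add: contour_integral_unique F_def)
  also have "\<dots> = exp (-(z^2)) * scaled_erf z"
    unfolding F_def by (simp add: mult.assoc flip: of_real_mult)
  finally show ?thesis
    by (simp add: exp_minus field_simps)
qed

lemma sums_a_coeff_power: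
  "(\<lambda>k. of_real (a_coeff k) * w^(2*k+5))
     sums (w - 4/3 * w^3 + of_real (sqrt pi) / 2 * (2 * w^2 - 1) * scaled_erf w)"
proof -
  define T where "T j = of_real (s_coeff j) * w^(2*j+1)" for j
  have T: "T sums scaled_erf w"
    unfolding T_def by (rule scaled_erf_sums)
  have T1: "(\<lambda>k. T (Suc k)) sums (scaled_erf w - T 0)"
    using T sums_Suc_iff[of T "scaled_erf w - T 0"] by simp
  have T2: "(\<lambda>k. T (Suc (Suc k))) sums (scaled_erf w - T 0 - T 1)"
    using T1 sums_Suc_iff[of "\<lambda>k. T (Suc k)" "scaled_erf w - T 0 - T 1"] by simp
  have "(\<lambda>k. of_real (sqrt pi) * (w^2 * T (Suc k) - 1/2 * T (Suc (Suc k))))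
      sums (of_real (sqrt pi) * (w^2 * (scaled_erf w - T 0) - 1/2 * (scaled_erf w - T 0 - T 1)))"
    by (intro sums_mult sums_diff T1 T2)
  moreover have "of_real (sqrt pi) * (w^2 * T (Suc k) - 1/2 * T (Suc (Suc k)))
      = of_real (a_coeff k) * w^(2*k+5)" for k
  proof -
    have "s_coeff (Suc k) = (real k + 5/2) * s_coeff (Suc (Suc k))"
      using s_coeff_Suc[of "Suc k"] by simp
    then have "a_coeff k = sqrt pi * (s_coeff (Suc k) - s_coeff (Suc (Suc k)) / 2)"
      unfolding a_coeff_def by (simp add: algebra_simps numeral_eq_Suc)
    then have a: "of_real (a_coeff k)
        = of_real (sqrt pi)
            * (of_real (s_coeff (Suc k)) - of_real (s_coeff (Suc (Suc k))) / (2 :: complex))"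
      by simp
    have "w^2 * T (Suc k) = of_real (s_coeff (Suc k)) * w^(2*k+5)"
      "T (Suc (Suc k)) = of_real (s_coeff (Suc (Suc k))) * w^(2*k+5)"
      unfolding T_def by (simp_all add: algebra_simps power_add numeral_eq_Suc)
    then show ?thesis
      unfolding a by (simp add: algebra_simps)
  qed
  moreover have "of_real (sqrt pi) * (w^2 * (scaled_erf w - T 0) - 1/2 * (scaled_erf w - T 0 - T 1))
      = w - 4/3 * w^3 + of_real (sqrt pi) / 2 * (2 * w^2 - 1) * scaled_erf w"
  proof -
    have "sqrt pi * s_coeff 0 = 2" "sqrt pi * s_coeff 1 = 4/3"
      using s_coeff_Suc[of 0] by (simp_all add: s_coeff_0 field_simps)
    then have s01: "of_real (sqrt pi) * of_real (s_coeff 0) = (2 :: complex)"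
      "of_real (sqrt pi) * of_real (s_coeff 1) = (4/3 :: complex)"
      by (simp_all only: of_real_mult[symmetric]) simp_all
    have "of_real (sqrt pi) * (w^2 * (scaled_erf w - T 0) - 1/2 * (scaled_erf w - T 0 - T 1))
        = of_real (sqrt pi) / 2 * (2 * w^2 - 1) * scaled_erf w
          - (of_real (sqrt pi) * of_real (s_coeff 0)) * (w^3 - w / 2)
          + (of_real (sqrt pi) * of_real (s_coeff 1)) * w^3 / 2"
      unfolding T_def by (simp add: algebra_simps power2_eq_square power3_eq_cube)
    then show ?thesis
      unfolding s01 by (simp add: algebra_simps)
  qed
  ultimately show ?thesis
    by simp
qed

definition kernel_ode_rhs_limit :: "complex \<Rightarrow> complex \<Rightarrow> complex" where
  "kernel_ode_rhs_limit z w =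
     (1/2) * (2*z*w)^3 * (exp (2*z*w) - 1)
     - 3 * z^3 * (w - 4/3 * w^3 + of_real (sqrt pi) / 2 * (2 * w^2 - 1) * scaled_erf w)"

lemma norm_c_coeff_term_le:
  fixes z w :: complex
  assumes "norm z \<le> R" "norm w \<le> R" "1 \<le> R"
  shows "norm (4 * of_real (c_coeff N) * z^(2*N+4) * (\<Sum>l<N. of_real (b_coeff l) * w^(2*l+4)))
    \<le> row_bound 2 R N"
proof -
  have "norm (\<Sum>l<N. of_real (b_coeff l) * w^(2*l+4)) \<le> (\<Sum>l<N. R^(2*N+4))"
  proof (rule sum_norm_le)
    fix l assume "l \<in> {..<N}"
    then have "2*l+4 \<le> 2*N+4" by simp
    have "norm (of_real (b_coeff l) * w^(2*l+4)) \<le> 1 * R^(2*l+4)"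
      unfolding norm_mult norm_of_real norm_power
      using b_coeff_le_1[of l] b_coeff_pos[of l] assms by (intro mult_mono power_mono) auto
    also have "\<dots> \<le> R^(2*N+4)"
      using assms(3) \<open>2*l+4 \<le> 2*N+4\<close> by (simp add: power_increasing)
    finally show "norm (of_real (b_coeff l) * w^(2*l+4)) \<le> R^(2*N+4)" .
  qed
  then have "norm (4 * of_real (c_coeff N) * z^(2*N+4) * (\<Sum>l<N. of_real (b_coeff l) * w^(2*l+4)))
      \<le> 4 * c_coeff N * R^(2*N+4) * (real N * R^(2*N+4))"
    unfolding norm_mult norm_of_real norm_power
    using assms c_coeff_pos[of N] by (intro mult_mono power_mono) auto
  also have "\<dots> = a_coeff N * ((2 * real N + 5) * (2 * real N + 2) * real N) * R^(4*N+8)"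
    unfolding a_coeff_times_c_coeff[symmetric] by (simp add: power_add[symmetric] algebra_simps)
  also have "\<dots> \<le> a_coeff N * (2 * real (N+1) * real (2*N+5)^2) * R^(4*N+9)"
  proof -
    have "(2 * real N + 5) * (2 * real N + 2) * real N
        \<le> (2 * real N + 5) * (2 * real N + 2) * (2 * real N + 5)"
      by (intro mult_left_mono) auto
    then have "(2 * real N + 5) * (2 * real N + 2) * real N \<le> 2 * real (N+1) * real (2*N+5)^2"
      by (simp add: power2_eq_square algebra_simps)
    moreover have "R^(4*N+8) \<le> R^(4*N+9)"
      using assms(3) by (intro power_increasing) auto
    ultimately show ?thesis
      using a_coeff_pos[of N] assms(3) by (intro mult_mono[OF mult_left_mono]) auto
  qed
  also have "\<dots> = row_bound 2 R N"
    by (simp add: row_bound_def)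
  finally show ?thesis .
qed

lemma sums_exp_tail: "(\<lambda>k. x^(k+4) / of_nat (fact (k+1))) sums (x^3 * (exp x - 1))" for x :: complex
proof -
  have "(\<lambda>n. x^(Suc n) /\<^sub>R fact (Suc n)) sums (exp x - 1)"
    using exp_converges[of x] sums_Suc_iff[of "\<lambda>n. x^n /\<^sub>R fact n" "exp x - 1"] by simp
  from sums_mult[OF this, of "x^3"] show ?thesis
    by (simp add: scaleR_conv_of_real field_simps power_add numeral_eq_Suc del: fact_Suc)
qed

lemma kernel_ode_rhs_tendsto: "(\<lambda>N. kernel_ode_rhs N z w) \<longlonglongrightarrow> kernel_ode_rhs_limit z w"
proof -
  define R where "R = max 1 (max (norm z) (norm w))"
  have R: "norm z \<le> R" "norm w \<le> R" "1 \<le> R"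
    unfolding R_def by auto
  have "(\<lambda>n. \<Sum>k<n. (2*z*w)^(k+4) / of_nat (fact (k+1))) \<longlonglongrightarrow> (2*z*w)^3 * (exp (2*z*w) - 1)"
    using sums_exp_tail by (simp add: sums_def)
  from LIMSEQ_subseq_LIMSEQ[OF this, of "\<lambda>N. 2*N"]
  have exp_part: "(\<lambda>N. \<Sum>k<2*N. (2*z*w)^(k+4) / of_nat (fact (k+1))) \<longlonglongrightarrow> (2*z*w)^3 * (exp (2*z*w) - 1)"
    by (simp add: strict_mono_def o_def)
  have "(row_bound 2 R) \<longlonglongrightarrow> 0"
    using R(3) by (intro summable_LIMSEQ_zero summable_row_bound) simp
  then have c_part:
    "(\<lambda>N. 4 * of_real (c_coeff N) * z^(2*N+4) * (\<Sum>l<N. of_real (b_coeff l) * w^(2*l+4))) \<longlonglongrightarrow> 0"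
    by (rule Lim_null_comparison[rotated]) (use norm_c_coeff_term_le[OF R] in auto)
  have a_part: "(\<lambda>N. \<Sum>k<N. of_real (a_coeff k) * w^(2*k+5))
      \<longlonglongrightarrow> w - 4/3 * w^3 + of_real (sqrt pi) / 2 * (2 * w^2 - 1) * scaled_erf w"
    using sums_a_coeff_power[of w] by (simp add: sums_def)
  have "(\<lambda>N. kernel_ode_rhs N z w) \<longlonglongrightarrow> (1/2) * ((2*z*w)^3 * (exp (2*z*w) - 1)) - 0
      - 3 * z^3 * (w - 4/3 * w^3 + of_real (sqrt pi) / 2 * (2 * w^2 - 1) * scaled_erf w)"
    unfolding kernel_ode_rhs_def by (intro tendsto_intros exp_part c_part a_part)
  then show ?thesis
    by (simp add: kernel_ode_rhs_limit_def mult.assoc)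
qed

lemma ode_op_kernel_hat_series:
  "ode_op z (kernel_hat_series 0 z w) (kernel_hat_series 1 z w) (kernel_hat_series 2 z w)
     = kernel_ode_rhs_limit z w"
proof -
  have "(\<lambda>N. \<Sum>k<N. hat_row j k z w) \<longlonglongrightarrow> kernel_hat_series j z w" for j
    unfolding kernel_hat_series_def by (rule summable_LIMSEQ[OF summable_hat_row])
  then have "(\<lambda>N. ode_op z (\<Sum>k<N. hat_row 0 k z w) (\<Sum>k<N. hat_row 1 k z w) (\<Sum>k<N. hat_row 2 k z w))
      \<longlonglongrightarrow> ode_op z (kernel_hat_series 0 z w) (kernel_hat_series 1 z w) (kernel_hat_series 2 z w)"
    unfolding ode_op_def by (intro tendsto_intros)
  then have "(\<lambda>N. kernel_ode_rhs N z w)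
      \<longlonglongrightarrow> ode_op z (kernel_hat_series 0 z w) (kernel_hat_series 1 z w) (kernel_hat_series 2 z w)"
    unfolding ode_op_sum_hat_row .
  then show ?thesis
    using kernel_ode_rhs_tendsto LIMSEQ_unique by blast
qed

section \<open>The homogeneous equation\<close>

lemma ode_wronskian:
  fixes f f' f'' g g' g'' :: "complex \<Rightarrow> complex"
  assumes f: "\<And>z. (f has_field_derivative f' z) (at z)" "\<And>z. (f' has_field_derivative f'' z) (at z)"
      "\<And>z. ode_op z (f z) (f' z) (f'' z) = 0"
    and g: "\<And>z. (g has_field_derivative g' z) (at z)" "\<And>z. (g' has_field_derivative g'' z) (at z)"
      "\<And>z. ode_op z (g z) (g' z) (g'' z) = 0"
  shows "\<exists>c. \<forall>z. f z * g' z - f' z * g z = c * z^2 * exp (z^2)"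
proof -
  define W where "W z = f z * g' z - f' z * g z" for z
  define W' where "W' z = f z * g'' z - f'' z * g z" for z
  have W: "(W has_field_derivative W' z) (at z)" for z
    unfolding W_def[abs_def] W'_def
    by (rule derivative_eq_intros f g refl | simp only:)+ (simp add: algebra_simps)
  have W'_eq: "z * W' z = (2 * z^2 + 2) * W z" for z
  proof -
    have "z * f'' z = (2 * z^2 + 2) * f' z + 2 * z * f z"
      "z * g'' z = (2 * z^2 + 2) * g' z + 2 * z * g z"
      using f(3)[of z] g(3)[of z] unfolding ode_op_def by (simp_all add: algebra_simps)
    moreover have "z * W' z = f z * (z * g'' z) - g z * (z * f'' z)"
      unfolding W'_def by (simp add: algebra_simps)
    ultimately show ?thesis
      unfolding W_def by (simp add: algebra_simps)
  qed
  \<comment> \<open>z W' = (2 z^2 + 2) W says exactly that exp(-z^2) W / z^2 is locally constant off 0.\<close>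
  define h where "h z = exp (-(z^2)) * W z / z^2" for z
  have h': "(h has_field_derivative 0) (at z)" if "z \<noteq> 0" for z
  proof -
    have V: "((\<lambda>z. exp (-(z^2)) * W z)
        has_field_derivative exp (-(z^2)) * (W' z - 2 * z * W z)) (at z)"
      by (rule derivative_eq_intros W refl | simp only:)+ (simp add: algebra_simps)
    have sq: "((\<lambda>z. z^2) has_field_derivative 2 * z) (at z)"
      by (auto intro!: derivative_eq_intros)
    have "(h has_field_derivative
        (exp (-(z^2)) * (W' z - 2 * z * W z) * z^2 - exp (-(z^2)) * W z * (2 * z)) / (z^2 * z^2))
        (at z)"
      unfolding h_def[abs_def] using DERIV_divide[OF V sq] that by simp
    moreover have "exp (-(z^2)) * (W' z - 2 * z * W z) * z^2 - exp (-(z^2)) * W z * (2 * z)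
        = exp (-(z^2)) * z * (z * W' z - (2 * z^2 + 2) * W z)"
      by (simp add: algebra_simps power2_eq_square)
    ultimately show ?thesis
      by (simp add: W'_eq)
  qed
  have "continuous_on (- {0}) h"
    using h' by (intro continuous_at_imp_continuous_on ballI DERIV_isCont) auto
  then obtain c where c: "\<And>z. z \<in> - {0} \<Longrightarrow> h z = c"
    using DERIV_zero_connected_constant[of "- {0::complex}" "{}" h]
      connected_punctured_universe[of "0::complex"] h'
    by auto
  have "W z = c * z^2 * exp (z^2)" for z
  proof (cases "z = 0")
    case True
    then show ?thesis
      using W'_eq[of 0] by simp
  next
    case False
    then have "exp (-(z^2)) * W z / z^2 = c"
      using c[of z] False by (simp add: h_def)
    with False show ?thesis
      by (simp add: exp_minus field_simps)
  qed
  then show ?thesis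
    unfolding W_def by blast
qed

definition even_solution :: "complex \<Rightarrow> complex" where
  "even_solution z = exp (z^2) * (2 * z^2 - 1)"

definition odd_solution :: "complex \<Rightarrow> complex" where
  "odd_solution z = (2 * z^2 - 1) * scaled_erf z + of_real (2 / sqrt pi) * z"

lemma even_solution_ode:
  defines "e' \<equiv> \<lambda>z. exp (z^2) * (4 * z^3 + 2 * z)"
    and "e'' \<equiv> \<lambda>z. exp (z^2) * (8 * z^4 + 16 * z^2 + 2)"
  shows "(even_solution has_field_derivative e' z) (at z)"
    and "(e' has_field_derivative e'' z) (at z)"
    and "ode_op z (even_solution z) (e' z) (e'' z) = 0"
proof -
  show "(even_solution has_field_derivative e' z) (at z)"
    unfolding even_solution_def[abs_def] e'_def
    by (rule derivative_eq_intros refl | simp only:)+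
      (simp add: algebra_simps power2_eq_square power3_eq_cube)
  show "(e' has_field_derivative e'' z) (at z)"
    unfolding e'_def e''_def
    by (rule derivative_eq_intros refl | simp only:)+
      (simp add: algebra_simps power2_eq_square power3_eq_cube power4_eq_xxxx)
  show "ode_op z (even_solution z) (e' z) (e'' z) = 0"
    unfolding ode_op_def even_solution_def e'_def e''_def
    by (simp add: algebra_simps power2_eq_square power3_eq_cube power4_eq_xxxx)
qed

lemma odd_solution_ode:
  defines "c \<equiv> complex_of_real (2 / sqrt pi)"
  defines "o' \<equiv> \<lambda>z. (4 * z^3 + 2 * z) * scaled_erf z + 2 * c * z^2"
    and "o'' \<equiv> \<lambda>z. (8 * z^4 + 16 * z^2 + 2) * scaled_erf z + c * (4 * z^3 + 6 * z)"
  shows "(odd_solution has_field_derivative o' z) (at z)"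
    and "(o' has_field_derivative o'' z) (at z)"
    and "ode_op z (odd_solution z) (o' z) (o'' z) = 0"
proof -
  show "(odd_solution has_field_derivative o' z) (at z)"
    unfolding odd_solution_def[abs_def] o'_def c_def
    by (rule derivative_eq_intros refl | simp only:)+
      (simp add: algebra_simps power2_eq_square power3_eq_cube)
  show "(o' has_field_derivative o'' z) (at z)"
    unfolding o'_def o''_def c_def
    by (rule derivative_eq_intros refl | simp only:)+
      (simp add: algebra_simps power2_eq_square power3_eq_cube power4_eq_xxxx)
  show "ode_op z (odd_solution z) (o' z) (o'' z) = 0"
    unfolding ode_op_def odd_solution_def o'_def o''_def c_def[symmetric]
    by (simp add: algebra_simps power2_eq_square power3_eq_cube power4_eq_xxxx)
qed

lemma wronskian_even_odd_solution:
  "even_solution z * ((4 * z^3 + 2 * z) * scaled_erf z + 2 * of_real (2 / sqrt pi) * z^2)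
     - exp (z^2) * (4 * z^3 + 2 * z) * odd_solution z
   = - 4 * of_real (2 / sqrt pi) * z^2 * exp (z^2)"
  unfolding even_solution_def odd_solution_def
  by (simp add: algebra_simps power2_eq_square power3_eq_cube)

lemma odd_solution_nonzero: "\<exists>z. odd_solution z \<noteq> 0"
proof (rule ccontr)
  assume "\<not> (\<exists>z. odd_solution z \<noteq> 0)"
  then have zero: "odd_solution = (\<lambda>_. 0)"
    by auto
  have "((4 * 1^3 + 2 * 1) * scaled_erf 1 + 2 * of_real (2 / sqrt pi) * 1^2) = (0 :: complex)"
    using odd_solution_ode(1)[of 1] unfolding zero by (metis DERIV_const DERIV_unique)
  then show False
    using wronskian_even_odd_solution[of 1] unfolding zero by simp
qed

lemma ode_solution_vanishing_at_0:
  fixes D D' D'' :: "complex \<Rightarrow> complex"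
  assumes D: "\<And>z. (D has_field_derivative D' z) (at z)" "\<And>z. (D' has_field_derivative D'' z) (at z)"
      "\<And>z. ode_op z (D z) (D' z) (D'' z) = 0"
    and D0: "D 0 = 0"
  shows "\<exists>\<beta>. \<forall>z. D z = \<beta> * odd_solution z"
proof -
  define c :: complex where "c = of_real (2 / sqrt pi)"
  have c: "c \<noteq> 0"
    unfolding c_def by simp
  obtain c1 where c1: "\<And>z. even_solution z * D' z - exp (z^2) * (4 * z^3 + 2 * z) * D z
      = c1 * z^2 * exp (z^2)"
    using ode_wronskian[OF even_solution_ode D] by blast
  obtain c2 where c2: "\<And>z. odd_solution z * D' z
      - ((4 * z^3 + 2 * z) * scaled_erf z + 2 * c * z^2) * D z
      = c2 * z^2 * exp (z^2)"
    using ode_wronskian[OF odd_solution_ode D] unfolding c_def by blast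
  \<comment> \<open>Off 0 the two Wronskians express D in the basis of even and odd solutions; as
    even_solution 0 = -1 while D 0 = odd_solution 0 = 0, continuity at 0 removes the even part.\<close>
  define \<alpha> where "\<alpha> = c2 / (4 * c)"
  define \<beta> where "\<beta> = - c1 / (4 * c)"
  have off_0: "D z = \<beta> * odd_solution z + \<alpha> * even_solution z" if "z \<noteq> 0" for z
  proof -
    have "odd_solution z * (even_solution z * D' z - exp (z^2) * (4 * z^3 + 2 * z) * D z)
        - even_solution z
            * (odd_solution z * D' z - ((4 * z^3 + 2 * z) * scaled_erf z + 2 * c * z^2) * D z)
      = D z * (even_solution z * ((4 * z^3 + 2 * z) * scaled_erf z + 2 * c * z^2)
        - exp (z^2) * (4 * z^3 + 2 * z) * odd_solution z)"
      by (simp add: algebra_simps)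
    then have "(c1 * odd_solution z - c2 * even_solution z) * (z^2 * exp (z^2))
        = (- 4 * c * D z) * (z^2 * exp (z^2))"
      unfolding c1 c2 wronskian_even_odd_solution[of z, folded c_def] by (simp only: algebra_simps)
    moreover have "z^2 * exp (z^2) \<noteq> 0"
      using that by simp
    ultimately have "c1 * odd_solution z - c2 * even_solution z = - 4 * c * D z"
      using mult_right_cancel by blast
    then show ?thesis
      unfolding \<alpha>_def \<beta>_def using c by (simp add: field_simps)
  qed
  define F where "F z = D z - \<beta> * odd_solution z - \<alpha> * even_solution z" for z
  have "isCont F 0"
    unfolding F_def[abs_def]
    using DERIV_isCont[OF D(1)] DERIV_isCont[OF even_solution_ode(1)]
      DERIV_isCont[OF odd_solution_ode(1)]
    by (intro continuous_intros) auto
  moreover have "\<forall>\<^sub>F z in at 0. F z = 0"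
    using off_0 by (auto simp: F_def eventually_at_filter)
  ultimately have "F 0 = 0"
    by (metis LIM_unique isCont_def tendsto_eventually)
  then have "\<alpha> = 0"
    using D0 by (simp add: F_def even_solution_def odd_solution_def)
  then have "D z = \<beta> * odd_solution z" for z
    using off_0[of z] D0 by (cases "z = 0") (simp_all add: odd_solution_def)
  then show ?thesis
    by blast
qed

section \<open>The closed form\<close>

definition kernel_limit_hat :: "complex \<Rightarrow> complex \<Rightarrow> complex" where
  "kernel_limit_hat z w =
     (1/2) * (z - w) * (1 + z*w - exp (2*z*w))
     + of_real (sqrt pi) / 4 * (exp (2*z*w) * (2*z^2 - 1) * (2*w^2 - 1) * scaled_erf (z - w)
       + (z^2 - 1) * (2*w^2 - 1) * scaled_erf w - (w^2 - 1) * (2*z^2 - 1) * scaled_erf z)"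

lemma kernel_limit_eq_kernel_limit_hat: "kernel_limit z w = kernel_limit_hat z w / (z*w)^4"
proof -
  have "exp (z^2 + w^2) = exp (2*z*w) * exp ((z - w)^2)"
    by (simp add: exp_add[symmetric] power2_eq_square algebra_simps)
  then have "of_real (sqrt pi) / 4 * exp (z^2 + w^2) * (2*z^2 - 1) * (2*w^2 - 1) * cerf (z - w)
      = of_real (sqrt pi) / 4 * (exp (2*z*w) * (2*z^2 - 1) * (2*w^2 - 1) * scaled_erf (z - w))"
    unfolding scaled_erf_eq_exp_cerf by (simp add: mult_ac)
  moreover have "(z^2 - 1) * (2*w^2 - 1) * exp (w^2) * cerf w
      - (w^2 - 1) * (2*z^2 - 1) * exp (z^2) * cerf z
      = (z^2 - 1) * (2*w^2 - 1) * scaled_erf w - (w^2 - 1) * (2*z^2 - 1) * scaled_erf z"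
    unfolding scaled_erf_eq_exp_cerf by (simp add: mult_ac)
  ultimately have "kernel_limit z w = ((1/2) * (z - w) * (1 + z*w - exp (2*z*w))
      + of_real (sqrt pi) / 4 * (exp (2*z*w) * (2*z^2 - 1) * (2*w^2 - 1) * scaled_erf (z - w))
      + of_real (sqrt pi) / 4
          * ((z^2 - 1) * (2*w^2 - 1) * scaled_erf w - (w^2 - 1) * (2*z^2 - 1) * scaled_erf z))
      / (z*w)^4"
    unfolding kernel_limit_def by (simp only: add_divide_distrib)
  also have "\<dots> = kernel_limit_hat z w / (z*w)^4"
    unfolding kernel_limit_hat_def by (simp add: algebra_simps)
  finally show ?thesis .
qed

lemma kernel_limit_hat_swap: "kernel_limit_hat w z = - kernel_limit_hat z w"
proof -
  have "scaled_erf (w - z) = - scaled_erf (z - w)"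
    using scaled_erf_minus[of "z - w"] by simp
  moreover have "exp (2*w*z) = exp (2*z*w)"
    by (simp add: mult_ac)
  ultimately show ?thesis
    unfolding kernel_limit_hat_def by (simp add: field_simps)
qed

lemma kernel_limit_hat_0: "kernel_limit_hat 0 w = 0"
  unfolding kernel_limit_hat_def by (simp add: scaled_erf_minus)

lemma kernel_limit_hat_ode:
  "\<exists>Q' Q''. (\<forall>z. ((\<lambda>z. kernel_limit_hat z w) has_field_derivative Q' z) (at z))
     \<and> (\<forall>z. (Q' has_field_derivative Q'' z) (at z))
     \<and> (\<forall>z. ode_op z (kernel_limit_hat z w) (Q' z) (Q'' z) = kernel_ode_rhs_limit z w)"
proof (intro exI conjI allI)
  define c :: complex where "c = of_real (2 / sqrt pi)"
  define E where "E z = exp (2*z*w)" for z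
  define Q' where "Q' z =
     (1/2) * (1 + z*w - E z) + (1/2) * (z - w) * (w - 2 * w * E z)
     + of_real (sqrt pi) / 4 *
       ((2*w^2 - 1) * E z * ((4*z^3 + 2*z) * scaled_erf (z - w) + c * (2*z^2 - 1))
        + 2*z*(2*w^2 - 1) * scaled_erf w
        - (w^2 - 1) * ((4*z^3 + 2*z) * scaled_erf z + c * (2*z^2 - 1)))" for z
  define Q'' where "Q'' z =
     (w - 2 * w * E z) - 2 * w^2 * (z - w) * E z
     + of_real (sqrt pi) / 4 *
       ((2*w^2 - 1) * (2 * w * E z * ((4*z^3 + 2*z) * scaled_erf (z - w) + c * (2*z^2 - 1))
          + E z * ((12*z^2 + 2) * scaled_erf (z - w)
            + (4*z^3 + 2*z) * (c + 2 * (z - w) * scaled_erf (z - w)) + 4*c*z))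
        + 2 * (2*w^2 - 1) * scaled_erf w
        - (w^2 - 1) * ((12*z^2 + 2) * scaled_erf z
            + (4*z^3 + 2*z) * (c + 2 * z * scaled_erf z) + 4*c*z))" for z
  show "((\<lambda>z. kernel_limit_hat z w) has_field_derivative Q' z) (at z)" for z
    unfolding kernel_limit_hat_def Q'_def E_def c_def
    by (rule derivative_eq_intros refl | simp only:)+
      (simp add: field_simps power2_eq_square power3_eq_cube)
  show "(Q' has_field_derivative Q'' z) (at z)" for z
    unfolding Q'_def[abs_def] Q''_def E_def c_def
    by (rule derivative_eq_intros refl | simp only:)+
      (simp add: field_simps power2_eq_square power3_eq_cube)
  show "ode_op z (kernel_limit_hat z w) (Q' z) (Q'' z) = kernel_ode_rhs_limit z w" for z
    unfolding ode_op_def kernel_limit_hat_def kernel_ode_rhs_limit_def Q'_def Q''_def E_def c_def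
    by (simp add: field_simps power2_eq_square power3_eq_cube)
qed

lemma kernel_hat_series_eq_kernel_limit_hat: "kernel_hat_series 0 z w = kernel_limit_hat z w"
proof -
  define D where "D w z = kernel_hat_series 0 z w - kernel_limit_hat z w" for w z
  have "\<exists>\<beta>. \<forall>z. D w z = \<beta> * odd_solution z" for w
  proof -
    obtain Q' Q'' where Q: "\<And>z. ((\<lambda>z. kernel_limit_hat z w) has_field_derivative Q' z) (at z)"
      "\<And>z. (Q' has_field_derivative Q'' z) (at z)"
      "\<And>z. ode_op z (kernel_limit_hat z w) (Q' z) (Q'' z) = kernel_ode_rhs_limit z w"
      using kernel_limit_hat_ode[of w] by blast
    show ?thesis
    proof (rule ode_solution_vanishing_at_0)
      show "(D w has_field_derivative kernel_hat_series 1 z w - Q' z) (at z)" for z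
        unfolding D_def using DERIV_diff[OF has_field_derivative_kernel_hat_series[of 0] Q(1)]
        by simp
      show "((\<lambda>z. kernel_hat_series 1 z w - Q' z)
          has_field_derivative kernel_hat_series 2 z w - Q'' z) (at z)" for z
        using DERIV_diff[OF has_field_derivative_kernel_hat_series[of 1] Q(2)]
        by (simp add: numeral_2_eq_2)
      show "ode_op z (D w z) (kernel_hat_series 1 z w - Q' z) (kernel_hat_series 2 z w - Q'' z)
          = 0" for z
        unfolding D_def ode_op_diff ode_op_kernel_hat_series Q(3) by simp
      show "D w 0 = 0"
        unfolding D_def kernel_hat_series_0 kernel_limit_hat_0 by simp
    qed
  qed
  then obtain \<beta> where \<beta>: "\<And>w z. D w z = \<beta> w * odd_solution z"
    by metis
  have D_swap: "D z w = - D w z" for z w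
    unfolding D_def kernel_hat_series_swap[of w z] kernel_limit_hat_swap[of w z] by simp
  obtain z0 where z0: "odd_solution z0 \<noteq> 0"
    using odd_solution_nonzero by blast
  have "\<beta> z0 = 0"
    using D_swap[of z0 z0] z0 unfolding \<beta> by simp
  then have "\<beta> w = 0"
    using D_swap[of w z0] z0 unfolding \<beta> by simp
  then show ?thesis
    using \<beta>[of w z] unfolding D_def by simp
qed

lemma kernel_limit_eq_suminf_kernel_row:
  assumes "z * w \<noteq> 0"
  shows "kernel_limit z w = (\<Sum>k. kernel_row k z w)"
  using assms
  unfolding kernel_limit_eq_kernel_limit_hat kernel_hat_series_eq_kernel_limit_hat[symmetric]
    kernel_hat_series_0
  by simp

theorem proposition3p2:
  shows "(\<forall>N::nat. N \<ge> 1 \<longrightarrow> (\<forall>z w :: complex.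
      z * deriv (deriv (\<lambda>\<zeta>. skew_kernel_hat N \<zeta> w)) z
      - (2 * z^2 + 2) * deriv (\<lambda>\<zeta>. skew_kernel_hat N \<zeta> w) z
      - 2 * z * skew_kernel_hat N z w
    = (1/2) * (\<Sum>k\<le>2*N-1. (2*z*w) ^ (k+4) / of_nat (fact (k+1)))
      - 4 * complex_of_real (sqrt pi * (real N + 1) * (real N + 2) / Gamma (real N + 5/2))
          * z ^ (2*N+4) * (\<Sum>l<N. complex_of_real ((real l + 3/2) / fact (l+2)) * w ^ (2*l+4))
      - 3 * complex_of_real (sqrt pi) * z^3
          * (\<Sum>k<N. complex_of_real ((real k + 2) / Gamma (real k + 7/2)) * w ^ (2*k+5))))
   \<and> (\<exists>K :: complex \<times> complex \<Rightarrow> complex.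
        (\<forall>z w. z * w \<noteq> 0 \<longrightarrow> K (z, w) = kernel_limit z w) \<and>
        (\<forall>S :: (complex \<times> complex) set. compact S \<longrightarrow>
           uniform_limit S (\<lambda>N p. skew_kernel N (fst p) (snd p)) K sequentially))"
  apply (intro conjI allI impI exI[of _ "\<lambda>p. \<Sum>k. kernel_row k (fst p) (snd p)"])
  subgoal for N z w
    using ode_op_skew_kernel_hat[of z N w] kernel_ode_rhs_eq[of N z w] by (simp only: ode_op_def)
  subgoal for z w
    by (simp add: kernel_limit_eq_suminf_kernel_row)
  subgoal for S
    by (rule uniform_limit_skew_kernel)
  done

end
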